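(* Let $a\in\mathbb{R}$, $x,y:\mathbb{N}_{a+1}\to\mathbb{R}$, $X(s)=\mathcal{N}_a\{x(k)\}$ and $Y(s)=\mathcal{N}_a\{y(k)\}$. Then $$\mathcal{N}_a\{x(k)y(k)\}=\frac{1}{2\pi\mathrm{i}}\oint_c X(z)\,Y\Big(\frac{s-z}{1-z}\Big)(1-z)^{-1}\,\mathrm{d}z,$$ where $c$ is a closed curve encircling the point $1$ (i.e. $(1,\mathrm{i}0)$) traversed clockwise and lying in the overlapping region of convergence of $X(z)$ and $Y\big(\frac{s-z}{1-z}\big)$.
   Context: For $a\in\mathbb{R}$, $\mathbb{N}_{a+1}=\{a+1,a+2,\dots\}$. For $f:\mathbb{N}_{a+1}\to\mathbb{C}$, the nabla Laplace transform ($N$-transform) is $\mathcal{N}_a\{f(k)\}=\sum_{k=1}^{\infty}(1-s)^{k-1}f(k+a)$, for those complex $s$ for which the series converges. Its inverse is given by $f(k)=\frac{1}{2\pi\mathrm{i}}\oint_c F(s)(1-s)^{-k+a}\,\mathrm{d}s$, $k\in\mathbb{N}_{a+1}$, with $c$ a clockwise closed curve around $1$ in the region of convergence of $F$. *)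

theory Defs
  imports "HOL-Complex_Analysis.Complex_Analysis"
begin

text \<open>Nabla Laplace transform: N_a{f}(s) = sum_{k>=1} (1-s)^(k-1) f(k+a).
  The function f is only used on N_{a+1} = {a+1, a+2, ...}. Reindexed with k = n+1.\<close>
definition nabla_laplace :: "real \<Rightarrow> (real \<Rightarrow> real) \<Rightarrow> complex \<Rightarrow> complex" where
  "nabla_laplace a f s = (\<Sum>n. (1 - s) ^ n * complex_of_real (f (a + real (Suc n))))"

definition nabla_conv_set :: "real \<Rightarrow> (real \<Rightarrow> real) \<Rightarrow> complex set" where
  "nabla_conv_set a f = {s. summable (\<lambda>n. (1 - s) ^ n * complex_of_real (f (a + real (Suc n))))}"

end

theory Submission
  imports Defs
begin

text \<open>Put \<open>w = 1 - z\<close>. Then \<open>X(z) = \<Sum> x\<^sub>n w\<^sup>n\<close> and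
  \<open>Y((s - z)/(1 - z)) = \<Sum> y\<^sub>m ((1 - s)/w)\<^sup>m\<close>, so the integrand is a Laurent series in
  \<open>w\<close> whose coefficient of \<open>w\<^sup>-\<^sup>1\<close> is \<open>\<Sum> x\<^sub>m y\<^sub>m (1 - s)\<^sup>m\<close>, the transform of the
  product. A clockwise curve around \<open>z = 1\<close> winds once positively around \<open>w = 0\<close>, so integrating
  termwise picks out exactly this coefficient. Termwise integration is justified by uniform
  geometric bounds on the compact path image, available because the path lies in the interior of
  the region of convergence. These uniform-limit arguments need a path with bounded derivative,
  so the given curve is first replaced by a nearby polynomial path with the same integrals of all
  functions holomorphic on that interior.\<close>

lemma has_contour_integral_power_int_one_minus:
  fixes \<gamma> :: "real \<Rightarrow> complex" and k :: int
  assumes \<gamma>: "valid_path \<gamma>" "pathfinish \<gamma> = pathstart \<gamma>" and one: "1 \<notin> path_image \<gamma>"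
  shows "((\<lambda>z. (1 - z) powi k) has_contour_integral
           (if k = -1 then - (2 * pi * \<i> * winding_number \<gamma> 1) else 0)) \<gamma>"
proof (cases "k = -1")
  case True
  have "((\<lambda>z. 1 / (z - 1)) has_contour_integral 2 * pi * \<i> * winding_number \<gamma> 1) \<gamma>"
    by (rule has_contour_integral_winding_number[OF \<gamma>(1) one])
  then have "((\<lambda>z. - (1 / (z - 1))) has_contour_integral - (2 * pi * \<i> * winding_number \<gamma> 1)) \<gamma>"
    by (simp add: has_contour_integral_neg)
  moreover have "- (1 / (z - 1)) = (1 - z) powi k" if "z \<noteq> 1" for z :: complex
    using that True by (simp add: power_int_minus field_simps)
  ultimately have "((\<lambda>z. (1 - z) powi k) has_contour_integral
                     - (2 * pi * \<i> * winding_number \<gamma> 1)) \<gamma>"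
    by (rule has_contour_integral_eq) (use one in blast)
  then show ?thesis
    using True by simp
next
  case False
  then have k1: "(of_int (k + 1) :: complex) \<noteq> 0"
    by (metis add.commute eq_neg_iff_add_eq_0 of_int_eq_0_iff)
  have "((\<lambda>z. - ((1 - z) powi (k + 1)) / of_int (k + 1)) has_field_derivative (1 - z) powi k)
          (at z within - {1})" if "z \<in> - {1}" for z :: complex
  proof -
    have "((\<lambda>z. (1 - z) powi (k + 1)) has_field_derivative of_int (k + 1) * (1 - z) powi k * -1)
            (at z within - {1})"
      using that by (auto intro!: derivative_eq_intros)
    from DERIV_cdivide[OF DERIV_minus[OF this], of "of_int (k + 1)"]
    show ?thesis
      using k1 by simp
  qed
  then have "((\<lambda>z. (1 - z) powi k) has_contour_integral 0) \<gamma>"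
    by (rule Cauchy_theorem_primitive[OF _ \<gamma>(1) _ \<gamma>(2)]) (use one in auto)
  then show ?thesis
    using False by simp
qed

lemma has_contour_integral_suminf:
  fixes f :: "nat \<Rightarrow> complex \<Rightarrow> complex"
  assumes \<gamma>: "valid_path \<gamma>" and B: "\<And>t. t \<in> {0..1} \<Longrightarrow> norm (vector_derivative \<gamma> (at t)) \<le> B"
    and f: "\<And>n. (f n has_contour_integral I n) \<gamma>"
    and M: "\<And>n z. z \<in> path_image \<gamma> \<Longrightarrow> norm (f n z) \<le> M n" "summable M"
  shows "summable I" "((\<lambda>z. \<Sum>n. f n z) has_contour_integral (\<Sum>n. I n)) \<gamma>"
proof -
  have partial: "((\<lambda>z. \<Sum>n<N. f n z) has_contour_integral (\<Sum>n<N. I n)) \<gamma>" for N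
    by (rule has_contour_integral_sum) (auto intro: f)
  have ul: "uniform_limit (path_image \<gamma>) (\<lambda>N z. \<Sum>n<N. f n z) (\<lambda>z. \<Sum>n. f n z) sequentially"
    using M by (rule Weierstrass_m_test)
  have ev: "\<forall>\<^sub>F N in sequentially. (\<lambda>z. \<Sum>n<N. f n z) contour_integrable_on \<gamma>"
    using partial by (auto intro: always_eventually has_contour_integral_integrable)
  note limit = contour_integral_uniform_limit[OF ev ul B \<gamma> trivial_limit_sequentially]
  have int: "(\<lambda>z. \<Sum>n. f n z) contour_integrable_on \<gamma>"
    using limit(1) by simp
  have "(\<lambda>N. \<Sum>n<N. I n) \<longlonglongrightarrow> contour_integral \<gamma> (\<lambda>z. \<Sum>n. f n z)"
    using limit(2) by (simp add: contour_integral_unique[OF partial])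
  then have "I sums contour_integral \<gamma> (\<lambda>z. \<Sum>n. f n z)"
    by (simp add: sums_def)
  then show "summable I" "((\<lambda>z. \<Sum>n. f n z) has_contour_integral (\<Sum>n. I n)) \<gamma>"
    using int by (auto simp: sums_iff has_contour_integral_integral)
qed

lemma path_image_inverse_bounded:
  fixes \<gamma> :: "real \<Rightarrow> complex"
  assumes "path \<gamma>" "w \<notin> path_image \<gamma>"
  obtains D where "0 \<le> D" "\<And>z. z \<in> path_image \<gamma> \<Longrightarrow> norm (1 / (w - z)) \<le> D"
proof -
  have "continuous_on (path_image \<gamma>) (\<lambda>z. 1 / (w - z))"
    using assms(2) by (intro continuous_intros) auto
  then have "bounded ((\<lambda>z. 1 / (w - z)) ` path_image \<gamma>)"
    using assms(1) by (intro compact_imp_bounded compact_continuous_image compact_path_image)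
  then obtain D where "\<And>z. z \<in> path_image \<gamma> \<Longrightarrow> norm (1 / (w - z)) \<le> D"
    unfolding bounded_iff by blast
  then show ?thesis
    using that[of "max D 0"] by force
qed

lemma has_contour_integral_powser_coefficient:
  fixes \<gamma> :: "real \<Rightarrow> complex" and a :: "nat \<Rightarrow> complex"
  assumes \<gamma>: "valid_path \<gamma>" "pathfinish \<gamma> = pathstart \<gamma>" "1 \<notin> path_image \<gamma>"
      "winding_number \<gamma> 1 = -1"
    and B: "\<And>t. t \<in> {0..1} \<Longrightarrow> norm (vector_derivative \<gamma> (at t)) \<le> B"
    and M: "\<And>n z. z \<in> path_image \<gamma> \<Longrightarrow> norm ((1 - z) ^ n * a n) \<le> M n" "summable M"
  shows "((\<lambda>z. (\<Sum>n. (1 - z) ^ n * a n) / (1 - z) ^ Suc m) has_contour_integral 2 * pi * \<i> * a m) \<gamma>"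
proof -
  obtain D where D: "0 \<le> D" "\<And>z. z \<in> path_image \<gamma> \<Longrightarrow> norm (1 / (1 - z)) \<le> D"
    using path_image_inverse_bounded[OF valid_path_imp_path[OF \<gamma>(1)] \<gamma>(3)] by blast
  define f where "f n z = (1 - z) ^ n * a n / (1 - z) ^ Suc m" for n z
  have "(f n has_contour_integral (if n = m then 2 * pi * \<i> * a m else 0)) \<gamma>" for n
  proof -
    have "((\<lambda>z. a n * (1 - z) powi (int n - int (Suc m))) has_contour_integral
            a n * (if int n - int (Suc m) = -1 then - (2 * pi * \<i> * winding_number \<gamma> 1) else 0)) \<gamma>"
      by (intro has_contour_integral_lmul has_contour_integral_power_int_one_minus \<gamma>(1-3))
    moreover have "a n * (1 - z) powi (int n - int (Suc m)) = f n z" if "z \<in> path_image \<gamma>" for z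
    proof -
      have "1 - z \<noteq> 0"
        using that \<gamma>(3) by auto
      then show ?thesis
        by (simp add: f_def power_int_diff del: of_nat_Suc)
    qed
    ultimately have "(f n has_contour_integral
        a n * (if int n - int (Suc m) = -1 then - (2 * pi * \<i> * winding_number \<gamma> 1) else 0)) \<gamma>"
      by (rule has_contour_integral_eq)
    then show ?thesis
      using \<gamma>(4) by (cases "n = m") (simp_all add: mult.commute)
  qed
  moreover have "norm (f n z) \<le> M n * D ^ Suc m" if "z \<in> path_image \<gamma>" for n z
  proof -
    have "norm (f n z) = norm ((1 - z) ^ n * a n) * norm (1 / (1 - z)) ^ Suc m"
      by (simp add: f_def norm_mult norm_divide norm_power power_one_over)
    also have "\<dots> \<le> M n * D ^ Suc m"
      using M(1) D that by (intro mult_mono power_mono) (auto intro: order_trans[OF norm_ge_zero])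
    finally show ?thesis .
  qed
  ultimately have "((\<lambda>z. \<Sum>n. f n z) has_contour_integral
                     (\<Sum>n. if n = m then 2 * pi * \<i> * a m else 0)) \<gamma>"
    using summable_mult2[OF M(2)] by (intro has_contour_integral_suminf(2)[OF \<gamma>(1) B])
  then have "((\<lambda>z. \<Sum>n. f n z) has_contour_integral 2 * pi * \<i> * a m) \<gamma>"
    using sums_unique[OF sums_single[of m "\<lambda>_. 2 * pi * \<i> * a m"]] by simp
  moreover have "(\<Sum>n. f n z) = (\<Sum>n. (1 - z) ^ n * a n) / (1 - z) ^ Suc m"
    if "z \<in> path_image \<gamma>" for z
    unfolding f_def
    by (rule suminf_divide, rule summable_comparison_test'[OF M(2)]) (use M(1) that in auto)
  ultimately show ?thesis
    by (rule has_contour_integral_eq)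
qed

lemma sums_coefficient_product_contour_integral:
  fixes \<gamma> :: "real \<Rightarrow> complex" and a b :: "nat \<Rightarrow> complex" and u :: complex
  assumes \<gamma>: "valid_path \<gamma>" "pathfinish \<gamma> = pathstart \<gamma>" "1 \<notin> path_image \<gamma>"
      "winding_number \<gamma> 1 = -1"
    and B: "\<And>t. t \<in> {0..1} \<Longrightarrow> norm (vector_derivative \<gamma> (at t)) \<le> B"
    and Ma: "\<And>n z. z \<in> path_image \<gamma> \<Longrightarrow> norm ((1 - z) ^ n * a n) \<le> Ma n" "summable Ma"
    and Mb: "\<And>n z. z \<in> path_image \<gamma> \<Longrightarrow> norm ((u / (1 - z)) ^ n * b n) \<le> Mb n" "summable Mb"
  shows "(\<lambda>m. u ^ m * (a m * b m)) sums
    (contour_integral \<gamma> (\<lambda>z. (\<Sum>n. (1 - z) ^ n * a n) * (\<Sum>n. (u / (1 - z)) ^ n * b n) / (1 - z))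
      / (2 * pi * \<i>))"
proof -
  define A where "A z = (\<Sum>n. (1 - z) ^ n * a n)" for z
  define g where "g m z = (u / (1 - z)) ^ m * b m * (A z / (1 - z))" for m z
  define I where "I m = u ^ m * b m * (2 * pi * \<i> * a m)" for m
  obtain D where D: "0 \<le> D" "\<And>z. z \<in> path_image \<gamma> \<Longrightarrow> norm (1 / (1 - z)) \<le> D"
    using path_image_inverse_bounded[OF valid_path_imp_path[OF \<gamma>(1)] \<gamma>(3)] by blast
  have g_integral: "(g m has_contour_integral I m) \<gamma>" for m
  proof -
    have "((\<lambda>z. u ^ m * b m * (A z / (1 - z) ^ Suc m)) has_contour_integral I m) \<gamma>"
      unfolding I_def A_def
      by (intro has_contour_integral_lmul has_contour_integral_powser_coefficient[OF \<gamma> B Ma])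
    moreover have "(\<lambda>z. u ^ m * b m * (A z / (1 - z) ^ Suc m)) = g m"
      by (simp add: fun_eq_iff g_def power_divide)
    ultimately show ?thesis
      by simp
  qed
  have g_bound: "norm (g m z) \<le> Mb m * (suminf Ma * D)" if "z \<in> path_image \<gamma>" for m z
  proof -
    have "norm (A z) \<le> suminf Ma"
      unfolding A_def using Ma that by (intro norm_suminf_le) auto
    moreover have "norm (A z / (1 - z)) = norm (A z) * norm (1 / (1 - z))"
      by (simp add: norm_divide)
    ultimately have "norm (A z / (1 - z)) \<le> suminf Ma * D"
      using D that by (auto intro!: mult_mono intro: order_trans[OF norm_ge_zero])
    moreover have "norm (g m z) = norm ((u / (1 - z)) ^ m * b m) * norm (A z / (1 - z))"
      by (simp only: g_def norm_mult)
    ultimately show ?thesis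
      using Mb(1)[OF that] by (auto intro!: mult_mono intro: order_trans[OF norm_ge_zero])
  qed
  note termwise = has_contour_integral_suminf[OF \<gamma>(1) B g_integral g_bound summable_mult2[OF Mb(2)]]
  have sum_g: "(\<Sum>m. g m z) = A z * (\<Sum>n. (u / (1 - z)) ^ n * b n) / (1 - z)"
    if "z \<in> path_image \<gamma>" for z
    unfolding g_def
    by (subst suminf_mult2[symmetric], rule summable_comparison_test'[OF Mb(2)]) (use Mb(1) that in auto)
  have "((\<lambda>z. A z * (\<Sum>n. (u / (1 - z)) ^ n * b n) / (1 - z)) has_contour_integral (\<Sum>m. I m)) \<gamma>"
    using termwise(2) sum_g by (rule has_contour_integral_eq)
  then have "I sums contour_integral \<gamma> (\<lambda>z. A z * (\<Sum>n. (u / (1 - z)) ^ n * b n) / (1 - z))"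
    using termwise(1) by (simp add: contour_integral_unique summable_sums)
  then have "(\<lambda>m. I m / (2 * pi * \<i>)) sums
      (contour_integral \<gamma> (\<lambda>z. A z * (\<Sum>n. (u / (1 - z)) ^ n * b n) / (1 - z)) / (2 * pi * \<i>))"
    by (rule sums_divide)
  then show ?thesis
    by (simp add: I_def A_def field_simps)
qed

lemma summable_majorant_on_compact:
  fixes g :: "'a::metric_space \<Rightarrow> complex" and a :: "nat \<Rightarrow> complex"
  assumes "compact K" "continuous_on K g"
    and enlarged: "\<And>z. z \<in> K \<Longrightarrow> \<exists>t>1. summable (\<lambda>n. (of_real t * g z) ^ n * a n)"
  obtains M where "summable M" "\<And>z n. z \<in> K \<Longrightarrow> norm (g z ^ n * a n) \<le> M n"
proof (cases "K = {}")
  case False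
  have "continuous_on K (\<lambda>z. norm (g z))"
    using assms(2) by (intro continuous_intros)
  then obtain z0 where z0: "z0 \<in> K" "\<And>z. z \<in> K \<Longrightarrow> norm (g z) \<le> norm (g z0)"
    using continuous_attains_sup[OF assms(1) False] by blast
  obtain t where t: "t > 1" "summable (\<lambda>n. (of_real t * g z0) ^ n * a n)"
    using enlarged z0(1) by blast
  then have "Bseq (\<lambda>n. (of_real t * g z0) ^ n * a n)"
    by (intro convergent_imp_Bseq convergentI[OF summable_LIMSEQ_zero])
  then obtain C where C: "\<And>n. norm ((of_real t * g z0) ^ n * a n) \<le> C"
    by (meson BseqE)
  show ?thesis
  proof
    show "summable (\<lambda>n. C * (1 / t) ^ n)"
      using t by (intro summable_mult summable_geometric) auto
    fix z n assume "z \<in> K"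
    have "norm (g z ^ n * a n) \<le> norm (g z0) ^ n * norm (a n)"
      using z0(2)[OF \<open>z \<in> K\<close>] by (auto simp: norm_mult norm_power intro!: mult_right_mono power_mono)
    also have "\<dots> = norm ((of_real t * g z0) ^ n * a n) * (1 / t) ^ n"
      using t by (simp add: norm_mult norm_power power_mult_distrib field_simps)
    also have "\<dots> \<le> C * (1 / t) ^ n"
      using C t by (intro mult_right_mono) auto
    finally show "norm (g z ^ n * a n) \<le> C * (1 / t) ^ n" .
  qed
qed (use that in auto)

lemma holomorphic_on_suminf_power_comp:
  fixes g :: "complex \<Rightarrow> complex" and a :: "nat \<Rightarrow> complex"
  assumes S: "open S" and g: "g holomorphic_on S"
    and enlarged: "\<And>z. z \<in> S \<Longrightarrow> \<exists>t>1. summable (\<lambda>n. (of_real t * g z) ^ n * a n)"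
  shows "(\<lambda>z. \<Sum>n. g z ^ n * a n) holomorphic_on S"
proof (rule holomorphic_uniform_sequence[OF S])
  show "(\<lambda>z. \<Sum>n<N. g z ^ n * a n) holomorphic_on S" for N
    using g by (intro holomorphic_intros)
  fix z assume "z \<in> S"
  then obtain d where d: "d > 0" "cball z d \<subseteq> S"
    using S open_contains_cball by blast
  moreover obtain M where "summable M" "\<And>w n. w \<in> cball z d \<Longrightarrow> norm (g w ^ n * a n) \<le> M n"
  proof (rule summable_majorant_on_compact[of "cball z d" g a])
    show "continuous_on (cball z d) g"
      using d g holomorphic_on_imp_continuous_on holomorphic_on_subset by blast
  qed (use d enlarged in auto)
  then have "uniform_limit (cball z d) (\<lambda>N w. \<Sum>n<N. g w ^ n * a n) (\<lambda>w. \<Sum>n. g w ^ n * a n) sequentially"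
    by (intro Weierstrass_m_test)
  ultimately show "\<exists>d>0. cball z d \<subseteq> S \<and>
      uniform_limit (cball z d) (\<lambda>N w. \<Sum>n<N. g w ^ n * a n) (\<lambda>w. \<Sum>n. g w ^ n * a n) sequentially"
    by blast
qed

lemma polynomial_path_with_same_contour_integrals:
  fixes \<gamma> :: "real \<Rightarrow> complex"
  assumes S: "open S" and \<gamma>: "valid_path \<gamma>" "path_image \<gamma> \<subseteq> S"
  obtains p B where "valid_path p" "pathstart p = pathstart \<gamma>" "pathfinish p = pathfinish \<gamma>"
    "path_image p \<subseteq> S" "\<And>t. t \<in> {0..1} \<Longrightarrow> norm (vector_derivative p (at t)) \<le> B"
    "\<And>f. f holomorphic_on S \<Longrightarrow> contour_integral p f = contour_integral \<gamma> f"
proof -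
  obtain d where d: "d > 0"
    and nearby: "\<And>g h. \<lbrakk>valid_path g; valid_path h;
                   \<forall>t\<in>{0..1}. norm (g t - \<gamma> t) < d \<and> norm (h t - \<gamma> t) < d;
                   pathstart h = pathstart g \<and> pathfinish h = pathfinish g\<rbrakk>
                   \<Longrightarrow> path_image g \<subseteq> S \<and> path_image h \<subseteq> S \<and>
                       (\<forall>f. f holomorphic_on S \<longrightarrow> contour_integral h f = contour_integral g f)"
    using contour_integral_nearby_ends[OF S valid_path_imp_path[OF \<gamma>(1)] \<gamma>(2)] by metis
  obtain p where p: "polynomial_function p" "pathstart p = pathstart \<gamma>" "pathfinish p = pathfinish \<gamma>"
    "\<forall>t\<in>{0..1}. norm (p t - \<gamma> t) < d"
    using path_approx_polynomial_function[OF valid_path_imp_path[OF \<gamma>(1)] d] by metis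
  have vp: "valid_path p"
    using p(1) valid_path_polynomial_function by blast
  obtain p' where p': "polynomial_function p'" "\<And>t. (p has_vector_derivative p' t) (at t)"
    using has_vector_derivative_polynomial_function[OF p(1)] by blast
  have "bounded (p' ` {0..1})"
    using continuous_on_polymonial_function[OF p'(1)]
    by (force intro!: compact_imp_bounded compact_continuous_image)
  then obtain B where "\<And>t. t \<in> {0..1} \<Longrightarrow> norm (vector_derivative p (at t)) \<le> B"
    using vector_derivative_at[OF p'(2)] unfolding bounded_iff by fastforce
  moreover have "path_image p \<subseteq> S"
    and "\<And>f. f holomorphic_on S \<Longrightarrow> contour_integral p f = contour_integral \<gamma> f"
    using nearby[OF \<gamma>(1) vp] p(2-4) d by auto
  ultimately show ?thesis
    using that vp p(2,3) by blast
qed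

lemma interior_radial_neighbourhood:
  fixes z0 :: complex
  assumes "z0 \<in> interior A"
  obtains e where "e > 0" "\<And>t. \<bar>t - 1\<bar> < e \<Longrightarrow> 1 - of_real t * (1 - z0) \<in> A"
proof -
  obtain r where r: "r > 0" "ball z0 r \<subseteq> A"
    using assms mem_interior by blast
  define e where "e = r / (norm (1 - z0) + 1)"
  show ?thesis
  proof
    show "e > 0"
      using r by (simp add: e_def add_nonneg_pos)
    fix t assume t: "\<bar>t - 1\<bar> < e"
    have "dist z0 (1 - of_real t * (1 - z0)) = \<bar>t - 1\<bar> * norm (1 - z0)"
    proof -
      have "z0 - (1 - of_real t * (1 - z0)) = of_real (t - 1) * (1 - z0)"
        by (simp add: algebra_simps)
      then show ?thesis
        by (simp only: dist_norm norm_mult norm_of_real)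
    qed
    also have "\<dots> \<le> e * norm (1 - z0)"
      using t by (intro mult_right_mono) auto
    also have "\<dots> = r * (norm (1 - z0) / (norm (1 - z0) + 1))"
      by (simp add: e_def)
    also have "\<dots> < r"
      by (rule mult_less_cancel_left2[THEN iffD2]) (use r(1) in \<open>simp add: divide_less_eq_1_pos add_nonneg_pos\<close>)
    finally show "1 - of_real t * (1 - z0) \<in> A"
      using r(2) by auto
  qed
qed

lemma summable_radially_enlarged:
  fixes c :: "nat \<Rightarrow> complex"
  assumes "z0 \<in> interior A" "\<And>z. z \<in> A \<Longrightarrow> summable (\<lambda>n. (1 - z) ^ n * c n)"
  shows "\<exists>t>1. summable (\<lambda>n. (of_real t * (1 - z0)) ^ n * c n)"
proof -
  obtain e where e: "e > 0" "\<And>t. \<bar>t - 1\<bar> < e \<Longrightarrow> 1 - of_real t * (1 - z0) \<in> A"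
    using interior_radial_neighbourhood[OF assms(1)] by blast
  have "1 - of_real (1 + e / 2) * (1 - z0) \<in> A"
    using e(1) by (intro e(2)) simp
  then have "summable (\<lambda>n. (of_real (1 + e / 2) * (1 - z0)) ^ n * c n)"
    using assms(2) by fastforce
  then show ?thesis
    using e(1) by (intro exI[of _ "1 + e / 2"]) simp
qed

lemma summable_radially_enlarged_inverse:
  fixes c :: "nat \<Rightarrow> complex"
  assumes "z0 \<in> interior A"
    and "\<And>z. z \<in> A \<Longrightarrow> z \<noteq> 1 \<and> summable (\<lambda>n. ((1 - s) / (1 - z)) ^ n * c n)"
  shows "\<exists>t>1. summable (\<lambda>n. (of_real t * ((1 - s) / (1 - z0))) ^ n * c n)"
proof -
  obtain e where e: "e > 0" "\<And>t. \<bar>t - 1\<bar> < e \<Longrightarrow> 1 - of_real t * (1 - z0) \<in> A"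
    using interior_radial_neighbourhood[OF assms(1)] by blast
  define t where "t = 1 + e / 2"
  have "\<bar>1 / t - 1\<bar> < e"
    using e(1) by (simp add: t_def field_simps add_pos_pos)
  then have mem: "1 - of_real (1 / t) * (1 - z0) \<in> A"
    by (rule e(2))
  have eq: "(1 - s) / (1 - (1 - of_real (1 / t) * (1 - z0))) = of_real t * ((1 - s) / (1 - z0))"
    using e(1) by (simp add: t_def field_simps)
  have "summable (\<lambda>n. (of_real t * ((1 - s) / (1 - z0))) ^ n * c n)"
    using conjunct2[OF assms(2)[OF mem]] unfolding eq .
  then show ?thesis
    using e(1) t_def by (intro exI[of _ t]) simp
qed

lemma one_minus_moebius: "z \<noteq> 1 \<Longrightarrow> 1 - (s - z) / (1 - z) = (1 - s) / (1 - (z::complex))"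
  by (simp add: field_simps)

definition nabla_coeff :: "real \<Rightarrow> (real \<Rightarrow> real) \<Rightarrow> nat \<Rightarrow> complex" where
  "nabla_coeff a f n = complex_of_real (f (a + real (Suc n)))"

lemma nabla_laplace_eq_suminf: "nabla_laplace a f s = (\<Sum>n. (1 - s) ^ n * nabla_coeff a f n)"
  by (simp add: nabla_laplace_def nabla_coeff_def)

lemma mem_nabla_conv_set_iff: "s \<in> nabla_conv_set a f \<longleftrightarrow> summable (\<lambda>n. (1 - s) ^ n * nabla_coeff a f n)"
  by (simp add: nabla_conv_set_def nabla_coeff_def)

lemma nabla_coeff_mult: "nabla_coeff a (\<lambda>k. x k * y k) n = nabla_coeff a x n * nabla_coeff a y n"
  by (simp add: nabla_coeff_def)

definition nabla_overlap_conv_set :: "real \<Rightarrow> (real \<Rightarrow> real) \<Rightarrow> (real \<Rightarrow> real) \<Rightarrow> complex \<Rightarrow> complex set" where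
  "nabla_overlap_conv_set a x y s =
     nabla_conv_set a x \<inter> {z. z \<noteq> 1 \<and> (s - z) / (1 - z) \<in> nabla_conv_set a y}"

lemma mem_nabla_overlap_conv_set_iff:
  "z \<in> nabla_overlap_conv_set a x y s \<longleftrightarrow> z \<noteq> 1 \<and>
     summable (\<lambda>n. (1 - z) ^ n * nabla_coeff a x n) \<and>
     summable (\<lambda>n. ((1 - s) / (1 - z)) ^ n * nabla_coeff a y n)"
  by (auto simp: nabla_overlap_conv_set_def mem_nabla_conv_set_iff one_minus_moebius)

lemma interior_nabla_overlap_conv_set_enlarged:
  assumes "z \<in> interior (nabla_overlap_conv_set a x y s)"
  shows "\<exists>t>1. summable (\<lambda>n. (of_real t * (1 - z)) ^ n * nabla_coeff a x n)"
    and "\<exists>t>1. summable (\<lambda>n. (of_real t * ((1 - s) / (1 - z))) ^ n * nabla_coeff a y n)"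
  using assms
  by (auto intro!: summable_radially_enlarged summable_radially_enlarged_inverse
      simp del: times_divide_eq_right simp: mem_nabla_overlap_conv_set_iff)

lemma nabla_convolution_integrand_holomorphic:
  "(\<lambda>z. nabla_laplace a x z * nabla_laplace a y ((s - z) / (1 - z)) / (1 - z))
     holomorphic_on interior (nabla_overlap_conv_set a x y s)"
proof -
  let ?S = "interior (nabla_overlap_conv_set a x y s)"
  have one: "z \<noteq> 1" if "z \<in> ?S" for z
    using that interior_subset mem_nabla_overlap_conv_set_iff by blast
  have "(\<lambda>z. (\<Sum>n. (1 - z) ^ n * nabla_coeff a x n) *
              (\<Sum>n. ((1 - s) / (1 - z)) ^ n * nabla_coeff a y n) / (1 - z)) holomorphic_on ?S"
    using one
    by (intro holomorphic_intros holomorphic_on_suminf_power_comp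
        interior_nabla_overlap_conv_set_enlarged) auto
  then show ?thesis
    by (rule holomorphic_transform) (simp add: nabla_laplace_eq_suminf one_minus_moebius one)
qed

lemma nabla_laplace_mult_sums_contour_integral:
  fixes p :: "real \<Rightarrow> complex"
  assumes p: "valid_path p" "pathfinish p = pathstart p" "winding_number p 1 = -1"
    and B: "\<And>t. t \<in> {0..1} \<Longrightarrow> norm (vector_derivative p (at t)) \<le> B"
    and p_S: "path_image p \<subseteq> interior (nabla_overlap_conv_set a x y s)"
  shows "(\<lambda>m. (1 - s) ^ m * nabla_coeff a (\<lambda>k. x k * y k) m) sums
    (contour_integral p (\<lambda>z. nabla_laplace a x z * nabla_laplace a y ((s - z) / (1 - z)) / (1 - z))
      / (2 * pi * \<i>))"
proof -
  have one_p: "1 \<notin> path_image p"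
    using p_S interior_subset mem_nabla_overlap_conv_set_iff by blast
  have compact: "compact (path_image p)"
    using p(1) by (simp add: compact_valid_path_image)
  have enlarged: "\<exists>t>1. summable (\<lambda>n. (of_real t * (1 - z)) ^ n * nabla_coeff a x n)"
      "\<exists>t>1. summable (\<lambda>n. (of_real t * ((1 - s) / (1 - z))) ^ n * nabla_coeff a y n)"
    if "z \<in> path_image p" for z
    using interior_nabla_overlap_conv_set_enlarged[OF subsetD[OF p_S that]] by blast+
  have "continuous_on (path_image p) (\<lambda>z. 1 - z)"
    by (intro continuous_intros)
  from summable_majorant_on_compact[OF compact this enlarged(1)]
  obtain Mx where Mx: "summable Mx"
      "\<And>z n. z \<in> path_image p \<Longrightarrow> norm ((1 - z) ^ n * nabla_coeff a x n) \<le> Mx n"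
    by blast
  have "continuous_on (path_image p) (\<lambda>z. (1 - s) / (1 - z))"
    using one_p by (intro continuous_intros) auto
  from summable_majorant_on_compact[OF compact this enlarged(2)]
  obtain My where My: "summable My"
      "\<And>z n. z \<in> path_image p \<Longrightarrow> norm (((1 - s) / (1 - z)) ^ n * nabla_coeff a y n) \<le> My n"
    by blast
  have "contour_integral p (\<lambda>z. (\<Sum>n. (1 - z) ^ n * nabla_coeff a x n) *
         (\<Sum>n. ((1 - s) / (1 - z)) ^ n * nabla_coeff a y n) / (1 - z)) =
        contour_integral p (\<lambda>z. nabla_laplace a x z * nabla_laplace a y ((s - z) / (1 - z)) / (1 - z))"
    using one_p by (intro contour_integral_cong) (auto simp: nabla_laplace_eq_suminf one_minus_moebius)
  with sums_coefficient_product_contour_integral[OF p(1,2) one_p p(3) B Mx(2,1) My(2,1)]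
  show ?thesis
    by (simp add: nabla_coeff_mult)
qed

theorem theorem12:
  fixes a :: real and x y :: "real \<Rightarrow> real" and s :: complex and c :: "real \<Rightarrow> complex"
  assumes "valid_path c"
    and "pathfinish c = pathstart c"
    and "1 \<notin> path_image c"
    and "winding_number c 1 = -1"
    and "path_image c \<subseteq> interior (nabla_conv_set a x \<inter>
           {z. z \<noteq> 1 \<and> (s - z) / (1 - z) \<in> nabla_conv_set a y})"
  shows "nabla_laplace a (\<lambda>k. x k * y k) s =
         1 / (2 * pi * \<i>) * contour_integral c
           (\<lambda>z. nabla_laplace a x z * nabla_laplace a y ((s - z) / (1 - z)) / (1 - z))"
proof -
  define S where "S = interior (nabla_overlap_conv_set a x y s)"
  have c_S: "path_image c \<subseteq> S" and one_S: "1 \<notin> S"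
    using assms(5) interior_subset by (auto simp: S_def nabla_overlap_conv_set_def)
  obtain p B where p: "valid_path p" "pathfinish p = pathstart p" "path_image p \<subseteq> S"
    and B: "\<And>t. t \<in> {0..1} \<Longrightarrow> norm (vector_derivative p (at t)) \<le> B"
    and p_c: "\<And>f. f holomorphic_on S \<Longrightarrow> contour_integral p f = contour_integral c f"
    using polynomial_path_with_same_contour_integrals[OF _ assms(1) c_S] assms(2)
    unfolding S_def by (metis open_interior)
  have "1 \<notin> path_image p"
    using p(3) one_S by blast
  moreover have "(\<lambda>w. 1 / (w - 1)) holomorphic_on S"
    using one_S by (intro holomorphic_intros) auto
  ultimately have "winding_number p 1 = winding_number c 1"
    using p(1) assms(1,3) by (simp add: winding_number_valid_path p_c)
  with assms(4) have "winding_number p 1 = -1"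
    by simp
  from nabla_laplace_mult_sums_contour_integral[OF p(1,2) this B p(3)[unfolded S_def]]
  show ?thesis
    using p_c[OF nabla_convolution_integrand_holomorphic[of a x y s, folded S_def]]
    by (simp add: nabla_laplace_eq_suminf sums_iff)
qed

end
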